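(* Let $a,b,p,q$ be positive real numbers and consider the system of difference equations $$y_{n+1}=\frac{a z_n}{p+z_n}e^{-y_n},\qquad z_{n+1}=\frac{b y_n}{q+y_n}e^{-z_n},\qquad n=0,1,2,\dots$$ with nonnegative initial values $y_0,z_0$. Then: (i) the system always has the zero equilibrium $(0,0)$; (ii) if $\frac{ab}{pq}>1$, then the system has a unique positive equilibrium.
   Context: An equilibrium of the system is a pair $(\bar y,\bar z)$ with $\bar y=\frac{a\bar z}{p+\bar z}e^{-\bar y}$ and $\bar z=\frac{b\bar y}{q+\bar y}e^{-\bar z}$; it is positive if $\bar y>0$ and $\bar z>0$. *)

theory Defs
  imports Complex_Main
begin

definition equilibrium :: "real \<Rightarrow> real \<Rightarrow> real \<Rightarrow> real \<Rightarrow> real \<Rightarrow> real \<Rightarrow> bool" where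
  "equilibrium a b p q y z \<longleftrightarrow>
     y = a * z / (p + z) * exp (- y) \<and> z = b * y / (q + y) * exp (- z)"

definition positive_equilibrium :: "real \<Rightarrow> real \<Rightarrow> real \<Rightarrow> real \<Rightarrow> real \<Rightarrow> real \<Rightarrow> bool" where
  "positive_equilibrium a b p q y z \<longleftrightarrow> equilibrium a b p q y z \<and> y > 0 \<and> z > 0"

end

theory Submission
  imports Defs
begin

text \<open>Clearing denominators, the first equilibrium equation says z (a - y e^y) = p y e^y.
  For y, z > 0 this forces y e^y < a and z = y r(y) with r(y) = p e^y / (a - y e^y), and
  then, after division by y, the second equation becomes \<phi>(y) = b with
  \<phi>(y) = r(y) e^(y r(y)) (q + y); here r = nullcline_slope a p and \<phi> = reduced_map a p q. On the interval where y e^y < a the function r is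
  positive and increasing, hence so is \<phi>; moreover \<phi>(0) = p q / a and \<phi>(y) blows up as
  y e^y approaches a. So \<phi>(y) = b has exactly one positive root when a b / (p q) > 1.\<close>

definition nullcline_slope :: "real \<Rightarrow> real \<Rightarrow> real \<Rightarrow> real" where
  "nullcline_slope a p y = p * exp y / (a - y * exp y)"

definition reduced_map :: "real \<Rightarrow> real \<Rightarrow> real \<Rightarrow> real \<Rightarrow> real" where
  "reduced_map a p q y = nullcline_slope a p y * exp (y * nullcline_slope a p y) * (q + y)"

lemma mul_exp_strict_mono: "strict_mono_on {0::real..} (\<lambda>x. x * exp x)"
  by (rule strict_mono_onI) (auto intro: mult_strict_mono)

lemma exists_mul_exp_eq:
  fixes c :: real
  assumes "0 \<le> c"
  shows "\<exists>x\<ge>0. x * exp x = c"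
proof -
  have "c \<le> c * exp c"
    using mult_left_mono[of 1 "exp c" c] assms by simp
  then have "\<exists>x\<ge>0. x \<le> c \<and> x * exp x = c"
    using assms by (intro IVT') (auto intro!: continuous_intros)
  then show ?thesis
    by blast
qed

lemma nullcline_slope_pos:
  assumes "0 < p" "y * exp y < a"
  shows "0 < nullcline_slope a p y"
  using assms by (simp add: nullcline_slope_def)

lemma nullcline_slope_strict_mono:
  assumes "0 < p"
  shows "strict_mono_on {y. 0 \<le> y \<and> y * exp y < a} (nullcline_slope a p)"
proof (rule strict_mono_onI)
  fix y y' :: real
  assume y: "y \<in> {y. 0 \<le> y \<and> y * exp y < a}" and y': "y' \<in> {y. 0 \<le> y \<and> y * exp y < a}"
    and "y < y'"
  then have "y * exp y < y' * exp y'"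
    using strict_mono_onD[OF mul_exp_strict_mono] by auto
  then have denom: "0 < a - y' * exp y'" "a - y' * exp y' < a - y * exp y"
    using y' by auto
  have "p * exp y / (a - y * exp y) < p * exp y' / (a - y * exp y)"
    using \<open>y < y'\<close> assms denom by (simp add: divide_strict_right_mono)
  also have "\<dots> \<le> p * exp y' / (a - y' * exp y')"
    using assms denom by (intro divide_left_mono) auto
  finally show "nullcline_slope a p y < nullcline_slope a p y'"
    by (simp add: nullcline_slope_def)
qed

lemma reduced_map_strict_mono:
  assumes "0 < p" "0 < q"
  shows "strict_mono_on {y. 0 \<le> y \<and> y * exp y < a} (reduced_map a p q)"
proof (rule strict_mono_onI)
  fix y y' :: real
  assume y: "y \<in> {y. 0 \<le> y \<and> y * exp y < a}" and y': "y' \<in> {y. 0 \<le> y \<and> y * exp y < a}"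
    and "y < y'"
  let ?r = "nullcline_slope a p"
  have r: "?r y < ?r y'" "0 < ?r y"
    using strict_mono_onD[OF nullcline_slope_strict_mono[OF assms(1)] y y' \<open>y < y'\<close>]
      nullcline_slope_pos[OF assms(1)] y by auto
  have "y * ?r y < y' * ?r y'"
    using r y \<open>y < y'\<close> by (intro mult_strict_mono) auto
  then have growth: "?r y * exp (y * ?r y) < ?r y' * exp (y' * ?r y')"
    using r by (intro mult_strict_mono) auto
  have "0 < ?r y * exp (y * ?r y)"
    using r by simp
  then show "reduced_map a p q y < reduced_map a p q y'"
    unfolding reduced_map_def using growth y \<open>y < y'\<close> assms
    by (intro mult_strict_mono[OF growth]) auto
qed

lemma reduced_map_lower_bound:
  assumes "0 < p" "0 < q" "0 \<le> y" "y * exp y < a"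
  shows "p * q / (a - y * exp y) \<le> reduced_map a p q y"
proof -
  let ?r = "nullcline_slope a p y"
  have "0 < ?r"
    using assms by (simp add: nullcline_slope_pos)
  have "p * q / (a - y * exp y) \<le> ?r * q"
    using assms by (simp add: nullcline_slope_def divide_right_mono)
  also have "\<dots> \<le> ?r * exp (y * ?r) * (q + y)"
    using \<open>0 < ?r\<close> assms by (intro mult_mono) auto
  finally show ?thesis
    by (simp add: reduced_map_def)
qed

lemma reduced_map_eq_solvable:
  assumes "0 < a" "0 < p" "0 < q" "p * q / a < b"
  shows "\<exists>y>0. y * exp y < a \<and> reduced_map a p q y = b"
proof -
  have "0 < p * q / a"
    using assms by simp
  then have "0 < b"
    using assms(4) by linarith
  have "p * q < a * b"
    using assms by (simp add: field_simps)
  then have "p * q / (2 * b) < a"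
    using mult_pos_pos[OF assms(1) \<open>0 < b\<close>] \<open>0 < b\<close> by (simp add: field_simps)
  then obtain y\<^sub>1 where y\<^sub>1: "0 \<le> y\<^sub>1" "y\<^sub>1 * exp y\<^sub>1 = a - p * q / (2 * b)"
    using exists_mul_exp_eq[of "a - p * q / (2 * b)"] assms \<open>0 < b\<close> by auto
  have "reduced_map a p q 0 < b"
    using assms by (simp add: reduced_map_def nullcline_slope_def)
  moreover have "b < reduced_map a p q y\<^sub>1"
  proof -
    have "p * q / (a - y\<^sub>1 * exp y\<^sub>1) = 2 * b"
      using y\<^sub>1 assms \<open>0 < b\<close> by simp
    then show ?thesis
      using reduced_map_lower_bound[OF assms(2,3) y\<^sub>1(1), of a] y\<^sub>1 assms \<open>0 < b\<close> by simp
  qed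
  moreover have below: "y * exp y < a" if "y \<in> {0..y\<^sub>1}" for y
  proof -
    have "y * exp y \<le> y\<^sub>1 * exp y\<^sub>1"
      using that y\<^sub>1(1) by (intro strict_mono_on_leD[OF mul_exp_strict_mono]) auto
    moreover have "0 < p * q / (2 * b)"
      using assms \<open>0 < b\<close> by simp
    ultimately show ?thesis
      using y\<^sub>1 by linarith
  qed
  then have "continuous_on {0..y\<^sub>1} (reduced_map a p q)"
    unfolding reduced_map_def nullcline_slope_def by (intro continuous_intros) force+
  ultimately obtain y where y: "0 \<le> y" "y \<le> y\<^sub>1" "reduced_map a p q y = b"
    using IVT'[of "reduced_map a p q" 0 b y\<^sub>1] y\<^sub>1 by auto
  moreover have "y \<noteq> 0"
    using y \<open>reduced_map a p q 0 < b\<close> by auto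
  ultimately show ?thesis
    using below[of y] by (intro exI[of _ y]) simp
qed

lemma eq_times_exp_minus_iff:
  fixes x c :: real
  shows "x = c * exp (- x) \<longleftrightarrow> x * exp x = c"
proof -
  have "x = c * exp (- x) \<longleftrightarrow> x * exp x = c * exp (- x) * exp x"
    by (rule mult_right_cancel[symmetric]) simp
  also have "c * exp (- x) * exp x = c"
    by (simp add: mult.assoc flip: exp_add)
  finally show ?thesis .
qed

lemma equilibrium_iff_cleared:
  assumes "0 < p + z" "0 < q + y"
  shows "equilibrium a b p q y z \<longleftrightarrow> y * exp y * (p + z) = a * z \<and> z * exp z * (q + y) = b * y"
  unfolding equilibrium_def eq_times_exp_minus_iff using assms by (simp add: eq_divide_eq)

lemma positive_equilibrium_iff:
  assumes "0 < a" "0 < b" "0 < p" "0 < q"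
  shows "positive_equilibrium a b p q y z \<longleftrightarrow>
    0 < y \<and> y * exp y < a \<and> z = y * nullcline_slope a p y \<and> reduced_map a p q y = b"
proof (cases "0 < y \<and> 0 < z")
  case True
  then have "equilibrium a b p q y z \<longleftrightarrow>
      z * (a - y * exp y) = p * y * exp y \<and> z * exp z * (q + y) = b * y"
    using assms by (auto simp add: equilibrium_iff_cleared algebra_simps)
  also have "\<dots> \<longleftrightarrow> y * exp y < a \<and> z = y * nullcline_slope a p y \<and> reduced_map a p q y = b"
  proof
    assume eqs: "z * (a - y * exp y) = p * y * exp y \<and> z * exp z * (q + y) = b * y"
    \<comment> \<open>the right-hand side of the first equation is positive, hence so is a - y e^y\<close>
    then have "y * exp y < a"
      using True assms by (smt (verit) exp_gt_zero mult_nonneg_nonpos mult_pos_pos)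
    moreover from this have z: "z = y * nullcline_slope a p y"
      using eqs by (simp add: nullcline_slope_def field_simps)
    moreover have "y * reduced_map a p q y = z * exp z * (q + y)"
      by (simp add: reduced_map_def z algebra_simps)
    then have "reduced_map a p q y = b"
      using eqs True by (simp add: mult.commute)
    ultimately show "y * exp y < a \<and> z = y * nullcline_slope a p y \<and> reduced_map a p q y = b"
      using True by simp
  next
    assume "y * exp y < a \<and> z = y * nullcline_slope a p y \<and> reduced_map a p q y = b"
    then have "a - y * exp y \<noteq> 0" and z: "z = y * nullcline_slope a p y"
      and "reduced_map a p q y = b"
      by auto
    moreover have "z * exp z * (q + y) = y * reduced_map a p q y"
      by (simp add: reduced_map_def z algebra_simps)
    ultimately show "z * (a - y * exp y) = p * y * exp y \<and> z * exp z * (q + y) = b * y"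
      by (simp add: nullcline_slope_def)
  qed
  finally show ?thesis
    using True by (simp add: positive_equilibrium_def)
next
  case False
  then show ?thesis
    using assms by (auto simp add: positive_equilibrium_def nullcline_slope_pos)
qed

theorem theorem3p1:
  fixes a b p q :: real
  assumes "a > 0" and "b > 0" and "p > 0" and "q > 0"
  shows "equilibrium a b p q 0 0 \<and>
         (a * b / (p * q) > 1 \<longrightarrow> (\<exists>!yz. positive_equilibrium a b p q (fst yz) (snd yz)))"
proof
  show "equilibrium a b p q 0 0"
    by (simp add: equilibrium_def)
  show "a * b / (p * q) > 1 \<longrightarrow> (\<exists>!yz. positive_equilibrium a b p q (fst yz) (snd yz))"
  proof
    assume "a * b / (p * q) > 1"
    then have "p * q / a < b"
      using assms by (simp add: field_simps)
    then obtain y where y: "0 < y" "y * exp y < a" "reduced_map a p q y = b"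
      using reduced_map_eq_solvable assms by blast
    note char = positive_equilibrium_iff[OF assms]
    show "\<exists>!yz. positive_equilibrium a b p q (fst yz) (snd yz)"
    proof (rule ex1I[of _ "(y, y * nullcline_slope a p y)"])
      show "positive_equilibrium a b p q (fst (y, y * nullcline_slope a p y))
          (snd (y, y * nullcline_slope a p y))"
        using y char by simp
    next
      fix yz :: "real \<times> real"
      assume "positive_equilibrium a b p q (fst yz) (snd yz)"
      then have "fst yz = y" "snd yz = y * nullcline_slope a p y"
        using strict_mono_on_eqD[OF reduced_map_strict_mono[OF assms(3,4), where a = a], of y "fst yz"] y
        by (auto simp add: char)
      then show "yz = (y, y * nullcline_slope a p y)"
        by (simp add: prod_eq_iff)
    qed
  qed
qed

end
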